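(* Let $((G,k,d),X,\langle X_L,X_R\rangle)$ be an instance of \textsc{Annotated Contraction(vc)} such that $X_R$ is an independent set of $G$ and every edge of $G[X]$ has both endpoints in $X_L\cup X_R$. Let $F_1=E(X_L,X_R)$ be the set of edges with one endpoint in $X_L$ and the other in $X_R$, and let $F_2$ be the edge set of a spanning forest of $G[X_L]$. Let $G'=(G-F_1)/F_2$, $k'=k-|F_2|$, $d'=d-|F_2|$, let $X'$ be the image of $X$ in $G'$ (i.e. $V(G[X]/F_2)$) and $X'_L$ the image of $X_L$ in $G'$ (i.e. $V(G[X_L]/F_2)$). Then $((G,k,d),X,\langle X_L,X_R\rangle)$ is a Yes-instance if and only if $((G',k',d'),X',\langle X'_L,X_R\rangle)$ is a Yes-instance; moreover $X'$ is an independent set of $G'$.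
   Context: All graphs are finite, simple and undirected. $G-F$ denotes deletion of the edge set $F$; $G/F$ denotes contraction of all edges of $F$ (contracting $uv$ deletes $u,v$ and adds a new vertex adjacent to $(N(u)\cup N(v))\setminus\{u,v\}$, without loops or parallel edges). $\mathrm{rank}(H)$ is $|V(H)|$ minus the number of connected components of $H$, and $\mathrm{rank}(S):=\mathrm{rank}(G[S])$ for $S\subseteq V(G)$. An instance of \textsc{Annotated Contraction(vc)} consists of a graph $G$, integers $k,d$, a vertex cover $X$ of $G$ (in the paper, a minimum vertex cover), and disjoint subsets $X_L,X_R\subseteq X$; it is a Yes-instance iff there exist $X_s\subseteq X$ and $Y_s\subseteq V(G)\setminus X$ with (i) $(X\setminus X_s)\cup Y_s$ is a vertex cover of $G$, (ii) $\mathrm{rank}((X\setminus X_s)\cup Y_s)\ge k$, (iii) $|Y_s|-|X_s|\le k-d$, and (iv) $X_L\cap X_s=\emptyset$ and $X_R\subseteq X_s$. *)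

theory Defs
  imports Main
begin

definition simple_graph :: "'a set \<Rightarrow> 'a set set \<Rightarrow> bool" where
  "simple_graph V E \<longleftrightarrow> finite V \<and> (\<forall>e\<in>E. e \<subseteq> V \<and> card e = 2)"

definition vertex_cover :: "'a set \<Rightarrow> 'a set set \<Rightarrow> 'a set \<Rightarrow> bool" where
  "vertex_cover V E S \<longleftrightarrow> S \<subseteq> V \<and> (\<forall>e\<in>E. e \<inter> S \<noteq> {})"

definition independent_set :: "'a set set \<Rightarrow> 'a set \<Rightarrow> bool" where
  "independent_set E S \<longleftrightarrow> (\<forall>e\<in>E. \<not> e \<subseteq> S)"

definition induced_edges :: "'a set set \<Rightarrow> 'a set \<Rightarrow> 'a set set" where
  "induced_edges E S = {e\<in>E. e \<subseteq> S}"

definition edges_between :: "'a set set \<Rightarrow> 'a set \<Rightarrow> 'a set \<Rightarrow> 'a set set" where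
  "edges_between E A B = {e\<in>E. \<exists>u\<in>A. \<exists>v\<in>B. e = {u, v}}"

definition reach :: "'a set \<Rightarrow> 'a set set \<Rightarrow> ('a \<times> 'a) set" where
  "reach V E = ({(x, y). {x, y} \<in> E \<and> x \<in> V \<and> y \<in> V}\<^sup>*) \<inter> (V \<times> V)"

definition components :: "'a set \<Rightarrow> 'a set set \<Rightarrow> 'a set set" where
  "components V E = V // reach V E"

definition graph_rank :: "'a set \<Rightarrow> 'a set set \<Rightarrow> int" where
  "graph_rank V E = int (card V) - int (card (components V E))"

definition set_rank :: "'a set set \<Rightarrow> 'a set \<Rightarrow> int" where
  "set_rank E S = graph_rank S (induced_edges E S)"

definition has_cycle :: "'a set set \<Rightarrow> bool" where
  "has_cycle F \<longleftrightarrow> (\<exists>vs. distinct vs \<and> length vs \<ge> 3 \<and>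
      (\<forall>i<length vs. {vs ! i, vs ! ((i + 1) mod length vs)} \<in> F))"

definition spanning_forest :: "'a set \<Rightarrow> 'a set set \<Rightarrow> 'a set set \<Rightarrow> bool" where
  "spanning_forest V E F \<longleftrightarrow> F \<subseteq> E \<and> \<not> has_cycle F \<and> reach V F = reach V E"

text \<open>Contraction (V,E)/F of all edges in F: the vertices of the contracted graph are
the connected components of (V,F) (a vertex not incident to F becomes the singleton
class); two distinct classes are adjacent iff some edge of E joins them.  Loops and
parallel edges are discarded.\<close>
definition contract :: "'a set \<Rightarrow> 'a set set \<Rightarrow> 'a set set \<Rightarrow> 'a set set \<times> 'a set set set" where
  "contract V E F = (V // reach V F,
     {{C, D} | C D. C \<in> V // reach V F \<and> D \<in> V // reach V F \<and> C \<noteq> D \<and>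
                     (\<exists>u\<in>C. \<exists>v\<in>D. {u, v} \<in> E)})"

definition contract_img :: "'a set \<Rightarrow> 'a set set \<Rightarrow> 'a \<Rightarrow> 'a set" where
  "contract_img V F v = reach V F `` {v}"

definition annotated_yes ::
  "'a set \<Rightarrow> 'a set set \<Rightarrow> int \<Rightarrow> int \<Rightarrow> 'a set \<Rightarrow> 'a set \<Rightarrow> 'a set \<Rightarrow> bool" where
  "annotated_yes V E k d X XL XR \<longleftrightarrow>
     (\<exists>Xs Ys. Xs \<subseteq> X \<and> Ys \<subseteq> V - X \<and>
        vertex_cover V E ((X - Xs) \<union> Ys) \<and>
        set_rank E ((X - Xs) \<union> Ys) \<ge> k \<and>
        int (card Ys) - int (card Xs) \<le> k - d \<and>
        XL \<inter> Xs = {} \<and> XR \<subseteq> Xs)"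

end

theory Submission
  imports Defs "HOL-Library.Transitive_Closure_Table"
begin

text \<open>A solution keeps every vertex of \<open>X\<^sub>L\<close> and deletes every vertex of \<open>X\<^sub>R\<close>, so its
vertex set \<open>S = (X - X\<^sub>s) \<union> Y\<^sub>s\<close> contains \<open>X\<^sub>L\<close> and avoids \<open>X\<^sub>R\<close>. The deleted edges
\<open>F\<^sub>1\<close> therefore do not matter: they are covered by \<open>X\<^sub>L\<close> and never lie inside \<open>S\<close>.
Contracting the spanning forest \<open>F\<^sub>2\<close> of \<open>G[X\<^sub>L]\<close> merges only vertices of \<open>X\<^sub>L \<subseteq> S\<close>
lying in a common component, and is injective elsewhere. Hence \<open>S\<close> is a vertex cover iff its
image is, and the components of \<open>G[S]\<close> correspond bijectively to those of the image of
\<open>G[S]\<close>, while the image has \<open>|F\<^sub>2|\<close> fewer vertices (a forest with \<open>|F\<^sub>2|\<close> edges on \<open>X\<^sub>L\<close>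
has \<open>|X\<^sub>L| - |F\<^sub>2|\<close> components). So the rank drops by exactly \<open>|F\<^sub>2|\<close>, and \<open>|Y\<^sub>s| - |X\<^sub>s|\<close>
is unchanged. Finally every edge inside \<open>X\<close> lies inside \<open>X\<^sub>L\<close> once \<open>F\<^sub>1\<close> is removed
(\<open>X\<^sub>R\<close> is independent), so it is contracted and the image of \<open>X\<close> is independent.\<close>

definition adj :: "'a set set \<Rightarrow> ('a \<times> 'a) set" where
  "adj F = {(x, y). {x, y} \<in> F}"

lemma sym_adj: "sym (adj F)"
  by (rule symI) (auto simp: adj_def insert_commute)

lemma rtrancl_adj_sym: "(x, y) \<in> (adj F)\<^sup>* \<Longrightarrow> (y, x) \<in> (adj F)\<^sup>*"
  using sym_rtrancl[OF sym_adj] by (rule symD)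

lemma equiv_rtrancl_adj: "equiv UNIV ((adj F)\<^sup>*)"
  by (rule equivI) (simp_all add: refl_rtrancl sym_rtrancl[OF sym_adj] trans_rtrancl)

lemma Image_rtrancl_adj_eq_iff: "(adj F)\<^sup>* `` {x} = (adj F)\<^sup>* `` {y} \<longleftrightarrow> (x, y) \<in> (adj F)\<^sup>*"
  by (rule eq_equiv_class_iff[OF equiv_rtrancl_adj]) simp_all

lemma mem_Image_rtrancl_adj_iff: "y \<in> (adj F)\<^sup>* `` {x} \<longleftrightarrow> (adj F)\<^sup>* `` {y} = (adj F)\<^sup>* `` {x}"
proof -
  have "y \<in> (adj F)\<^sup>* `` {x} \<longleftrightarrow> (y, x) \<in> (adj F)\<^sup>*"
    using rtrancl_adj_sym[of x y F] rtrancl_adj_sym[of y x F] by blast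
  then show ?thesis
    by (simp only: Image_rtrancl_adj_eq_iff)
qed

lemma adj_insert: "adj (insert {u, v} F) = adj F \<union> {(u, v), (v, u)}"
  unfolding adj_def by (auto simp: doubleton_eq_iff)

lemma adj_mono: "F \<subseteq> G \<Longrightarrow> adj F \<subseteq> adj G"
  unfolding adj_def by auto

lemma rtrancl_adj_in_Union: "(x, y) \<in> (adj F)\<^sup>* \<Longrightarrow> x = y \<or> x \<in> \<Union>F \<and> y \<in> \<Union>F"
  by (induction rule: rtrancl_induct) (auto simp: adj_def)

lemma reach_eq_rtrancl_adj: "\<Union>F \<subseteq> V \<Longrightarrow> reach V F = (adj F)\<^sup>* \<inter> V \<times> V"
proof -
  assume "\<Union>F \<subseteq> V"
  then have "{(x, y). {x, y} \<in> F \<and> x \<in> V \<and> y \<in> V} = adj F"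
    unfolding adj_def by auto
  then show ?thesis
    unfolding reach_def by simp
qed

lemma Image_reach: "\<Union>F \<subseteq> V \<Longrightarrow> v \<in> V \<Longrightarrow> reach V F `` {v} = (adj F)\<^sup>* `` {v}"
  using rtrancl_adj_in_Union[of v _ F] by (auto simp: reach_eq_rtrancl_adj) blast

lemma quotient_reach: "\<Union>F \<subseteq> V \<Longrightarrow> V // reach V F = (\<lambda>v. (adj F)\<^sup>* `` {v}) ` V"
  unfolding quotient_def using Image_reach[of F V] by auto

lemma equiv_reach: "equiv V (reach V E)"
proof (rule equivI)
  let ?A = "{(x, y). {x, y} \<in> E \<and> x \<in> V \<and> y \<in> V}"
  have "sym ?A"
    by (rule symI) (auto simp: insert_commute)
  then have "sym (?A\<^sup>*)"
    by (rule sym_rtrancl)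
  then show "sym (reach V E)"
    unfolding reach_def by (auto intro: symI dest: symD)
  show "reach V E \<subseteq> V \<times> V" "refl_on V (reach V E)"
    unfolding reach_def refl_on_def by auto
  show "trans (reach V E)"
    unfolding reach_def by (rule transI) (auto intro: rtrancl_trans)
qed

lemma card_image_merge:
  assumes "finite Q" and "a \<in> Q" and "b \<in> Q" and "a \<noteq> b" and "c \<notin> Q - {a, b}"
  shows "card ((\<lambda>x. if x \<in> {a, b} then c else x) ` Q) + 1 = card Q"
proof -
  have "(\<lambda>x. if x \<in> {a, b} then c else x) ` Q = insert c (Q - {a, b})"
    using assms(2) by (auto intro: rev_image_eqI[of a])
  moreover have "card (Q - {a, b}) + 2 = card Q"
    using assms(1-4) card_mono[OF assms(1), of "{a, b}"] by (simp add: card_Diff_subset)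
  ultimately show ?thesis
    using assms(1,5) by simp
qed

lemma has_cycle_mono: "has_cycle F \<Longrightarrow> F \<subseteq> G \<Longrightarrow> has_cycle G"
  unfolding has_cycle_def by blast

lemma has_cycle_insert:
  assumes "(u, v) \<in> (adj F)\<^sup>*" and "u \<noteq> v" and "{u, v} \<notin> F"
  shows "has_cycle (insert {u, v} F)"
proof -
  have "(\<lambda>a b. (a, b) \<in> adj F)\<^sup>*\<^sup>* u v"
    using assms(1) by (simp add: rtranclp_rtrancl_eq)
  then obtain xs0 where "rtrancl_path (\<lambda>a b. (a, b) \<in> adj F) u xs0 v"
    by (auto simp: rtranclp_eq_rtrancl_path)
  then obtain xs where path: "rtrancl_path (\<lambda>a b. (a, b) \<in> adj F) u xs v"
    and distinct: "distinct (u # xs)"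
    using rtrancl_path_distinct by metis
  have "xs \<noteq> []"
    using path assms(2) by (auto elim: rtrancl_path.cases)
  then have last: "(u # xs) ! length xs = v"
    using rtrancl_path_last[OF path] by (simp add: last_conv_nth)
  have "xs \<noteq> [v]"
    using rtrancl_path_nth[OF path, of 0] assms(3) by (auto simp: adj_def)
  with \<open>xs \<noteq> []\<close> last have long: "length (u # xs) \<ge> 3"
    by (cases xs; cases "tl xs") auto
  show ?thesis
    unfolding has_cycle_def
  proof (intro exI[of _ "u # xs"] conjI distinct long allI impI)
    fix i
    assume i: "i < length (u # xs)"
    show "{(u # xs) ! i, (u # xs) ! ((i + 1) mod length (u # xs))} \<in> insert {u, v} F"
    proof (cases "i < length xs")
      case True
      then show ?thesis
        using rtrancl_path_nth[OF path True] by (simp add: adj_def)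
    next
      case False
      with i have "i = length xs"
        by simp
      with last show ?thesis
        by (auto simp: insert_commute)
    qed
  qed
qed

lemma rtrancl_adj_insert:
  "(adj (insert {u, v} F))\<^sup>* = (adj F)\<^sup>* \<union> ((adj F)\<^sup>* `` {u, v}) \<times> ((adj F)\<^sup>* `` {u, v})"
  (is "?M = ?N \<union> ?U \<times> ?U")
proof
  show "?M \<subseteq> ?N \<union> ?U \<times> ?U"
  proof (rule subrelI)
    fix a b
    assume "(a, b) \<in> ?M"
    then show "(a, b) \<in> ?N \<union> ?U \<times> ?U"
    proof (induction rule: rtrancl_induct)
      case (step y z)
      from step.hyps(2) have "(y, z) \<in> adj F \<or> y \<in> {u, v} \<and> z \<in> {u, v}"
        by (auto simp: adj_insert)
      then show ?case
      proof
        assume yz: "(y, z) \<in> adj F"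
        show ?case
          using step.IH rtrancl_into_rtrancl[OF _ yz] by blast
      next
        assume "y \<in> {u, v} \<and> z \<in> {u, v}"
        moreover have "(z, z) \<in> ?N"
          by simp
        ultimately show ?case
          using step.IH rtrancl_adj_sym[of a y] by blast
      qed
    qed simp
  qed
next
  have N_M: "?N \<subseteq> ?M"
    by (rule rtrancl_mono, rule adj_mono) blast
  have uv: "(u, v) \<in> ?M" "(v, u) \<in> ?M"
    by (auto simp: adj_insert)
  show "?N \<union> ?U \<times> ?U \<subseteq> ?M"
  proof (rule subrelI)
    fix a b
    assume "(a, b) \<in> ?N \<union> ?U \<times> ?U"
    then show "(a, b) \<in> ?M"
    proof
      assume "(a, b) \<in> ?U \<times> ?U"
      then obtain w w' where w: "w \<in> {u, v}" "w' \<in> {u, v}" "(w, a) \<in> ?N" "(w', b) \<in> ?N"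
        by blast
      have "(a, w) \<in> ?M"
        using N_M rtrancl_adj_sym[OF w(3)] by blast
      moreover have "(w, w') \<in> ?M"
        using w(1,2) uv by auto
      moreover have "(w', b) \<in> ?M"
        using N_M w(4) by blast
      ultimately show ?thesis
        by (meson rtrancl_trans)
    qed (use N_M in blast)
  qed
qed

lemma card_classes_forest:
  assumes "finite A" and "F \<subseteq> {e. e \<subseteq> A \<and> card e = 2}" and "\<not> has_cycle F"
  shows "card ((\<lambda>w. (adj F)\<^sup>* `` {w}) ` A) + card F = card A"
proof -
  have "F \<subseteq> Pow A"
    using assms(2) by blast
  then have "finite F"
    by (rule finite_subset) (simp add: assms(1))
  from this assms(2,3) show ?thesis
  proof (induction F rule: finite_induct)
    case empty
    have "inj_on (\<lambda>w. {w}) A"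
      by (rule inj_onI) simp
    then show ?case
      by (simp add: adj_def card_image)
  next
    case (insert e F)
    then obtain u v where e: "e = {u, v}" "u \<noteq> v" and uv: "u \<in> A" "v \<in> A"
      by (auto simp: card_2_iff)
    define q where "q w = (adj F)\<^sup>* `` {w}" for w
    define U where "U = q u \<union> q v"
    have IH: "card (q ` A) + card F = card A"
      using insert has_cycle_mono[of F "insert e F"] unfolding q_def by blast
    have "(u, v) \<notin> (adj F)\<^sup>*"
      using has_cycle_insert[of u v F] e insert by blast
    then have "q u \<noteq> q v"
      unfolding q_def by (simp add: Image_rtrancl_adj_eq_iff)
    have mem_q: "y \<in> q x \<longleftrightarrow> q y = q x" for x y
      unfolding q_def by (rule mem_Image_rtrancl_adj_iff)
    have mem_U: "w \<in> U \<longleftrightarrow> q w \<in> {q u, q v}" for w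
      unfolding U_def Un_iff mem_q by blast
    have "(adj F)\<^sup>* `` {u, v} = U"
      unfolding U_def q_def by blast
    then have M: "(adj (insert e F))\<^sup>* = (adj F)\<^sup>* \<union> U \<times> U"
      unfolding e rtrancl_adj_insert by (simp only:)
    have merged: "(adj (insert e F))\<^sup>* `` {w} = (if q w \<in> {q u, q v} then U else q w)" for w
    proof (cases "q w \<in> {q u, q v}")
      case True
      then have "w \<in> U" "q w \<subseteq> U"
        using mem_U unfolding U_def by auto
      then have "(adj (insert e F))\<^sup>* `` {w} = U"
        unfolding M q_def by blast
      with True show ?thesis
        by simp
    next
      case False
      then have "w \<notin> U"
        using mem_U by blast
      then have "(adj (insert e F))\<^sup>* `` {w} = q w"
        unfolding M q_def by blast
      with False show ?thesis
        by simp
    qed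
    have "U \<notin> q ` A - {q u, q v}"
    proof
      assume "U \<in> q ` A - {q u, q v}"
      then obtain w where "U = q w" "q w \<noteq> q u"
        by blast
      moreover have "u \<in> U"
        unfolding U_def q_def by simp
      ultimately show False
        using mem_q by blast
    qed
    then have merge: "card ((\<lambda>C. if C \<in> {q u, q v} then U else C) ` q ` A) + 1 = card (q ` A)"
      using assms(1) uv \<open>q u \<noteq> q v\<close> by (intro card_image_merge) auto
    have classes: "(\<lambda>w. (adj (insert e F))\<^sup>* `` {w}) ` A
        = (\<lambda>C. if C \<in> {q u, q v} then U else C) ` q ` A"
      by (simp only: merged image_image)
    have "card (insert e F) = card F + 1"
      using insert by simp
    then show ?case
      unfolding classes using IH merge by linarith
  qed
qed

lemma card_quotient_image:
  assumes "q ` S = S'" and "equiv S R" and "equiv S' R'"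
    and "\<And>x y. x \<in> S \<Longrightarrow> y \<in> S \<Longrightarrow> (x, y) \<in> R \<longleftrightarrow> (q x, q y) \<in> R'"
  shows "card (S // R) = card (S' // R')"
proof -
  have class_image: "q ` (R `` {x}) = R' `` {q x}" if "x \<in> S" for x
  proof
    show "q ` (R `` {x}) \<subseteq> R' `` {q x}"
      using assms(2,4) that by (auto dest: equiv_class_eq_iff[THEN iffD1])
    show "R' `` {q x} \<subseteq> q ` (R `` {x})"
    proof
      fix z
      assume "z \<in> R' `` {q x}"
      then have "z \<in> S'"
        using assms(3) by (auto dest: equiv_type)
      then obtain y where "y \<in> S" "z = q y"
        using assms(1) by blast
      with \<open>z \<in> R' `` {q x}\<close> assms(4)[OF that \<open>y \<in> S\<close>] show "z \<in> q ` (R `` {x})"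
        by blast
    qed
  qed
  have "bij_betw ((`) q) (S // R) (S' // R')"
  proof (rule bij_betw_imageI)
    show "inj_on ((`) q) (S // R)"
    proof (rule inj_onI)
      fix C D
      assume "C \<in> S // R" "D \<in> S // R" "q ` C = q ` D"
      then obtain x y where xy: "x \<in> S" "y \<in> S" "C = R `` {x}" "D = R `` {y}"
        by (auto elim!: quotientE)
      with \<open>q ` C = q ` D\<close> class_image have "R' `` {q x} = R' `` {q y}"
        by simp
      then have "(q x, q y) \<in> R'"
        using assms(1,3) xy by (auto simp: eq_equiv_class_iff)
      then show "C = D"
        using assms(2,4) xy by (simp add: equiv_class_eq)
    qed
    show "(`) q ` (S // R) = S' // R'"
      using assms(1) class_image unfolding quotient_def by auto
  qed
  then show ?thesis
    by (rule bij_betw_same_card)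
qed

lemma annotated_yesI:
  assumes "Xs \<subseteq> X" and "Ys \<subseteq> V - X" and "vertex_cover V E ((X - Xs) \<union> Ys)"
    and "set_rank E ((X - Xs) \<union> Ys) \<ge> k" and "int (card Ys) - int (card Xs) \<le> k - d"
    and "XL \<inter> Xs = {}" and "XR \<subseteq> Xs"
  shows "annotated_yes V E k d X XL XR"
  unfolding annotated_yes_def by (intro exI[of _ Xs] exI[of _ Ys] conjI assms)

lemma annotated_yesE:
  assumes "annotated_yes V E k d X XL XR"
  obtains Xs Ys where "Xs \<subseteq> X" and "Ys \<subseteq> V - X" and "vertex_cover V E ((X - Xs) \<union> Ys)"
    and "set_rank E ((X - Xs) \<union> Ys) \<ge> k" and "int (card Ys) - int (card Xs) \<le> k - d"
    and "XL \<inter> Xs = {}" and "XR \<subseteq> Xs"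
proof -
  from assms obtain Xs Ys where "Xs \<subseteq> X \<and> Ys \<subseteq> V - X \<and> vertex_cover V E ((X - Xs) \<union> Ys) \<and>
      set_rank E ((X - Xs) \<union> Ys) \<ge> k \<and> int (card Ys) - int (card Xs) \<le> k - d \<and>
      XL \<inter> Xs = {} \<and> XR \<subseteq> Xs"
    unfolding annotated_yes_def by (elim exE)
  then show thesis
    by (elim conjE) (rule that)
qed

lemma annotated_yes_Diff_edges:
  assumes "L \<subseteq> X" and "\<And>e. e \<in> F \<Longrightarrow> e \<inter> L \<noteq> {} \<and> e \<inter> R \<noteq> {}"
  shows "annotated_yes V E k d X L R \<longleftrightarrow> annotated_yes V (E - F) k d X L R"
proof -
  have same: "vertex_cover V (E - F) ((X - Xs) \<union> Ys) = vertex_cover V E ((X - Xs) \<union> Ys)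
      \<and> set_rank (E - F) ((X - Xs) \<union> Ys) = set_rank E ((X - Xs) \<union> Ys)"
    if "Xs \<subseteq> X" "Ys \<subseteq> V - X" "L \<inter> Xs = {}" "R \<subseteq> Xs" for Xs Ys
  proof
    let ?S = "(X - Xs) \<union> Ys"
    have "L \<subseteq> ?S" "?S \<inter> R = {}"
      using that assms(1) by blast+
    then have "e \<inter> ?S \<noteq> {}" "\<not> e \<subseteq> ?S" if "e \<in> F" for e
      using assms(2)[OF that] by blast+
    then show "vertex_cover V (E - F) ?S = vertex_cover V E ?S"
      unfolding vertex_cover_def by blast
    have "induced_edges (E - F) ?S = induced_edges E ?S"
      unfolding induced_edges_def using \<open>\<And>e. e \<in> F \<Longrightarrow> \<not> e \<subseteq> ?S\<close> by blast
    then show "set_rank (E - F) ?S = set_rank E ?S"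
      unfolding set_rank_def by simp
  qed
  show ?thesis
  proof
    assume "annotated_yes V E k d X L R"
    then obtain Xs Ys where solution: "Xs \<subseteq> X" "Ys \<subseteq> V - X" "vertex_cover V E ((X - Xs) \<union> Ys)"
      "set_rank E ((X - Xs) \<union> Ys) \<ge> k" "int (card Ys) - int (card Xs) \<le> k - d"
      "L \<inter> Xs = {}" "R \<subseteq> Xs"
      by (rule annotated_yesE)
    with same[OF solution(1,2,6,7)] show "annotated_yes V (E - F) k d X L R"
      by (intro annotated_yesI[of Xs X Ys]) simp_all
  next
    assume "annotated_yes V (E - F) k d X L R"
    then obtain Xs Ys where solution: "Xs \<subseteq> X" "Ys \<subseteq> V - X" "vertex_cover V (E - F) ((X - Xs) \<union> Ys)"
      "set_rank (E - F) ((X - Xs) \<union> Ys) \<ge> k" "int (card Ys) - int (card Xs) \<le> k - d"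
      "L \<inter> Xs = {}" "R \<subseteq> Xs"
      by (rule annotated_yesE)
    with same[OF solution(1,2,6,7)] show "annotated_yes V E k d X L R"
      by (intro annotated_yesI[of Xs X Ys]) simp_all
  qed
qed

lemma edge_subset_if_notin_edges_between:
  assumes "independent_set E B" and "\<forall>e\<in>induced_edges E X. e \<subseteq> A \<union> B"
    and "e \<in> E - edges_between E A B" and "e \<subseteq> X" and "card e = 2"
  shows "e \<subseteq> A"
proof (rule ccontr)
  assume "\<not> e \<subseteq> A"
  from assms(5) obtain a b where "e = {a, b}"
    by (meson card_2_iff)
  moreover have "e \<subseteq> A \<union> B" "\<not> e \<subseteq> B"
    using assms(1-4) unfolding independent_set_def induced_edges_def by blast+
  ultimately have "a \<in> A \<and> b \<in> B \<or> b \<in> A \<and> a \<in> B"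
    using \<open>\<not> e \<subseteq> A\<close> by blast
  with \<open>e = {a, b}\<close> assms(3) have "e \<in> edges_between E A B"
    unfolding edges_between_def by (auto simp: insert_commute)
  with assms(3) show False
    by blast
qed

locale forest_contraction =
  fixes V :: "'a set" and E :: "'a set set" and L :: "'a set" and F :: "'a set set"
  assumes simple_graph: "simple_graph V E"
    and L_subset: "L \<subseteq> V"
    and spanning_forest: "spanning_forest L (induced_edges E L) F"
begin

definition cls :: "'a \<Rightarrow> 'a set" where
  "cls v = (adj F)\<^sup>* `` {v}"

definition contracted_edges :: "'a set set set" where
  "contracted_edges = {{cls a, cls b} | a b. {a, b} \<in> E \<and> cls a \<noteq> cls b}"

lemma finite_V: "finite V"
  using simple_graph by (simp add: simple_graph_def)

lemma edge_subset: "e \<in> E \<Longrightarrow> e \<subseteq> V"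
  using simple_graph by (simp add: simple_graph_def)

lemma edgeE:
  assumes "e \<in> E"
  obtains a b where "e = {a, b}" "a \<noteq> b"
  using assms simple_graph by (auto simp: simple_graph_def card_2_iff)

lemma F_subset: "F \<subseteq> induced_edges E L"
  using spanning_forest by (simp add: spanning_forest_def)

lemma Union_F_subset: "\<Union>F \<subseteq> L"
  using F_subset by (auto simp: induced_edges_def)

lemma cls_eq_iff: "cls a = cls b \<longleftrightarrow> (a, b) \<in> (adj F)\<^sup>*"
  unfolding cls_def by (rule Image_rtrancl_adj_eq_iff)

lemma mem_cls_iff: "b \<in> cls a \<longleftrightarrow> cls b = cls a"
  unfolding cls_def by (rule mem_Image_rtrancl_adj_iff)

lemma cls_self: "a \<in> cls a"
  unfolding cls_def by simp

lemma cls_eq_imp_in_L: "cls a = cls b \<Longrightarrow> a \<noteq> b \<Longrightarrow> a \<in> L \<and> b \<in> L"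
  unfolding cls_eq_iff using rtrancl_adj_in_Union[of a b F] Union_F_subset by blast

lemma inj_on_cls: "inj_on cls (- L)"
  by (rule inj_onI) (use cls_eq_imp_in_L in blast)

lemma cls_image_mem_iff:
  assumes "L \<subseteq> S"
  shows "cls a \<in> cls ` S \<longleftrightarrow> a \<in> S"
proof
  assume "cls a \<in> cls ` S"
  then obtain s where "s \<in> S" "cls a = cls s"
    by blast
  then show "a \<in> S"
    using cls_eq_imp_in_L assms by blast
qed simp

lemma image_cls_disjoint:
  assumes "A \<inter> B = {}" and "B \<inter> L = {}"
  shows "cls ` A \<inter> cls ` B = {}"
proof (rule ccontr)
  assume "cls ` A \<inter> cls ` B \<noteq> {}"
  then obtain a b where "a \<in> A" "b \<in> B" "cls a = cls b"
    by blast
  then show False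
    using assms cls_eq_imp_in_L by blast
qed

lemma image_cls_Diff: "B \<inter> L = {} \<Longrightarrow> cls ` (A - B) = cls ` A - cls ` B"
  using image_cls_disjoint[of "A - B" B] by blast

lemma cls_eq_if_edge_in_L:
  assumes "{a, b} \<in> E" and "a \<in> L" and "b \<in> L"
  shows "cls a = cls b"
proof -
  have "(a, b) \<in> reach L (induced_edges E L)"
    using assms unfolding reach_def induced_edges_def by auto
  then have "(a, b) \<in> reach L F"
    using spanning_forest by (simp add: spanning_forest_def)
  then show ?thesis
    unfolding cls_eq_iff by (simp add: reach_eq_rtrancl_adj[OF Union_F_subset])
qed

lemma contracted_edgeE:
  assumes "{C, D} \<in> contracted_edges"
  obtains a b where "C = cls a" "D = cls b" "{a, b} \<in> E"
proof -
  from assms obtain a b where "{C, D} = {cls a, cls b}" "{a, b} \<in> E"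
    unfolding contracted_edges_def by blast
  moreover have "{b, a} \<in> E" if "{a, b} \<in> E" for a b
    using that by (simp add: insert_commute)
  ultimately show ?thesis
    using that by (auto simp: doubleton_eq_iff)
qed

lemma contracted_edgeI: "{a, b} \<in> E \<Longrightarrow> cls a \<noteq> cls b \<Longrightarrow> {cls a, cls b} \<in> contracted_edges"
  unfolding contracted_edges_def by blast

lemma fst_contract_eq:
  assumes "L \<subseteq> A"
  shows "fst (contract A H F) = cls ` A"
proof -
  have "\<Union>F \<subseteq> A"
    using Union_F_subset assms by blast
  then show ?thesis
    unfolding contract_def cls_def by (simp add: quotient_reach)
qed

lemma snd_contract_eq: "snd (contract V E F) = contracted_edges"
proof -
  have classes: "V // reach V F = cls ` V"
    using fst_contract_eq[OF L_subset, of E] by (simp add: contract_def)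
  show ?thesis
  proof (intro set_eqI iffI)
    fix e
    assume "e \<in> snd (contract V E F)"
    then obtain C D u v where e: "e = {C, D}" "C \<in> cls ` V" "D \<in> cls ` V" "C \<noteq> D"
      and uv: "u \<in> C" "v \<in> D" "{u, v} \<in> E"
      unfolding contract_def classes snd_conv by blast
    obtain x y where "C = cls x" "D = cls y"
      using e(2,3) by blast
    then have "C = cls u" "D = cls v"
      using uv(1,2) mem_cls_iff[of u x] mem_cls_iff[of v y] by simp_all
    with e uv show "e \<in> contracted_edges"
      using contracted_edgeI by simp
  next
    fix e
    assume "e \<in> contracted_edges"
    then obtain a b where e: "e = {cls a, cls b}" "{a, b} \<in> E" "cls a \<noteq> cls b"
      unfolding contracted_edges_def by blast
    then have "a \<in> V" "b \<in> V"
      using edge_subset by blast+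
    with e have "cls a \<in> cls ` V \<and> cls b \<in> cls ` V \<and> cls a \<noteq> cls b
        \<and> (\<exists>u\<in>cls a. \<exists>v\<in>cls b. {u, v} \<in> E)"
      using cls_self by blast
    with e(1) show "e \<in> snd (contract V E F)"
      unfolding contract_def classes snd_conv by blast
  qed
qed

lemma contract_img_eq: "v \<in> V \<Longrightarrow> contract_img V F v = cls v"
  unfolding contract_img_def cls_def by (rule Image_reach[OF order_trans[OF Union_F_subset L_subset]])

lemma card_image_cls:
  assumes "L \<subseteq> S" and "S \<subseteq> V"
  shows "card (cls ` S) + card F = card S"
proof -
  have "finite S"
    using finite_V assms(2) by (rule finite_subset[rotated])
  then have "finite L"
    using assms(1) by (rule finite_subset[rotated])
  have "F \<subseteq> {e. e \<subseteq> L \<and> card e = 2}"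
    using F_subset simple_graph unfolding induced_edges_def simple_graph_def by blast
  moreover have "\<not> has_cycle F"
    using spanning_forest by (simp add: spanning_forest_def)
  ultimately have "card (cls ` L) + card F = card L"
    unfolding cls_def by (rule card_classes_forest[OF \<open>finite L\<close>])
  moreover have "cls ` S = cls ` L \<union> cls ` (S - L)"
    using assms(1) by blast
  moreover have "cls ` L \<inter> cls ` (S - L) = {}"
    by (rule image_cls_disjoint) blast+
  moreover have "card (cls ` (S - L)) = card (S - L)"
    by (rule card_image, rule inj_on_subset[OF inj_on_cls]) blast
  moreover have "card (S - L) + card L = card S"
    using card_Diff_subset[OF \<open>finite L\<close> assms(1)] card_mono[OF \<open>finite S\<close> assms(1)] by simp
  ultimately show ?thesis
    using \<open>finite S\<close> \<open>finite L\<close> card_Un_disjoint[of "cls ` L" "cls ` (S - L)"] by simp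
qed

lemma vertex_cover_contract_iff:
  assumes "L \<subseteq> S" and "S \<subseteq> V"
  shows "vertex_cover V E S \<longleftrightarrow> vertex_cover (cls ` V) contracted_edges (cls ` S)"
proof
  assume cover: "vertex_cover V E S"
  show "vertex_cover (cls ` V) contracted_edges (cls ` S)"
    unfolding vertex_cover_def
  proof (intro conjI ballI)
    show "cls ` S \<subseteq> cls ` V"
      using assms(2) by blast
  next
    fix e
    assume "e \<in> contracted_edges"
    then obtain a b where e: "e = {cls a, cls b}" "{a, b} \<in> E"
      unfolding contracted_edges_def by blast
    with cover have "{a, b} \<inter> S \<noteq> {}"
      unfolding vertex_cover_def by blast
    then have "cls a \<in> cls ` S \<or> cls b \<in> cls ` S"
      by blast
    then show "e \<inter> cls ` S \<noteq> {}"
      unfolding e(1) by blast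
  qed
next
  assume cover: "vertex_cover (cls ` V) contracted_edges (cls ` S)"
  show "vertex_cover V E S"
    unfolding vertex_cover_def
  proof (intro conjI ballI assms(2))
    fix e
    assume "e \<in> E"
    then obtain a b where e: "e = {a, b}" "a \<noteq> b"
      by (rule edgeE)
    show "e \<inter> S \<noteq> {}"
    proof (cases "cls a = cls b")
      case True
      then have "a \<in> L"
        using cls_eq_imp_in_L e(2) by blast
      with e(1) assms(1) show ?thesis
        by blast
    next
      case False
      with \<open>e \<in> E\<close> e have "{cls a, cls b} \<in> contracted_edges"
        by (simp add: contracted_edgeI)
      with cover have "{cls a, cls b} \<inter> cls ` S \<noteq> {}"
        unfolding vertex_cover_def by blast
      then have "cls a \<in> cls ` S \<or> cls b \<in> cls ` S"
        by blast
      then have "a \<in> S \<or> b \<in> S"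
        by (simp only: cls_image_mem_iff[OF assms(1)])
      with e show ?thesis
        by blast
    qed
  qed
qed

lemma rtrancl_adj_F_subset:
  assumes "L \<subseteq> S"
  shows "(adj F)\<^sup>* \<subseteq> (adj (induced_edges E S))\<^sup>*"
proof (rule rtrancl_mono, rule adj_mono)
  show "F \<subseteq> induced_edges E S"
    using F_subset assms unfolding induced_edges_def by blast
qed

lemma rtrancl_adj_induced_imp_contracted:
  assumes "(x, y) \<in> (adj (induced_edges E S))\<^sup>*"
  shows "(cls x, cls y) \<in> (adj (induced_edges contracted_edges (cls ` S)))\<^sup>*"
  using assms
proof (induction rule: rtrancl_induct)
  case (step y z)
  have "{y, z} \<in> E" "y \<in> S" "z \<in> S"
    using step.hyps(2) unfolding adj_def induced_edges_def by auto
  have "(cls y, cls z) \<in> (adj (induced_edges contracted_edges (cls ` S)))\<^sup>*"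
  proof (cases "cls y = cls z")
    case False
    with \<open>{y, z} \<in> E\<close> have "{cls y, cls z} \<in> contracted_edges"
      by (rule contracted_edgeI)
    with \<open>y \<in> S\<close> \<open>z \<in> S\<close> have "(cls y, cls z) \<in> adj (induced_edges contracted_edges (cls ` S))"
      unfolding adj_def induced_edges_def by blast
    then show ?thesis
      by (rule r_into_rtrancl)
  qed simp
  with step.IH show ?case
    by (rule rtrancl_trans)
qed simp

lemma rtrancl_adj_contracted_imp_induced:
  assumes "L \<subseteq> S"
    and "(cls x, cls y) \<in> (adj (induced_edges contracted_edges (cls ` S)))\<^sup>*"
    and "x \<in> S" and "y \<in> S"
  shows "(x, y) \<in> (adj (induced_edges E S))\<^sup>*"
proof -
  have "(x, y) \<in> (adj (induced_edges E S))\<^sup>*"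
    if "(C, D) \<in> (adj (induced_edges contracted_edges (cls ` S)))\<^sup>*"
      and "C = cls x" "D = cls y" "y \<in> S" for C D y
    using that
  proof (induction arbitrary: y rule: rtrancl_induct)
    case base
    then have "cls x = cls y"
      by simp
    then have "(x, y) \<in> (adj F)\<^sup>*"
      by (simp only: cls_eq_iff)
    then show ?case
      using rtrancl_adj_F_subset[OF assms(1)] by blast
  next
    case (step D D')
    then have edge: "{D, D'} \<in> contracted_edges" and "D \<in> cls ` S" "D' \<in> cls ` S"
      unfolding adj_def induced_edges_def by auto
    from edge obtain a b where ab: "D = cls a" "D' = cls b" "{a, b} \<in> E"
      by (rule contracted_edgeE)
    have "a \<in> S" "b \<in> S"
      using ab \<open>D \<in> cls ` S\<close> \<open>D' \<in> cls ` S\<close> cls_image_mem_iff[OF assms(1)] by simp_all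
    have "cls b = cls y"
      using ab(2) step.prems(2) by simp
    then have "(b, y) \<in> (adj F)\<^sup>*"
      by (simp only: cls_eq_iff)
    have "(x, a) \<in> (adj (induced_edges E S))\<^sup>*"
      using step.IH ab(1) \<open>a \<in> S\<close> step.prems(1) by blast
    moreover have "(a, b) \<in> adj (induced_edges E S)"
      using ab(3) \<open>a \<in> S\<close> \<open>b \<in> S\<close> unfolding adj_def induced_edges_def by blast
    moreover have "(b, y) \<in> (adj (induced_edges E S))\<^sup>*"
      using \<open>(b, y) \<in> (adj F)\<^sup>*\<close> rtrancl_adj_F_subset[OF assms(1)] by blast
    ultimately show ?case
      by (meson rtrancl_into_rtrancl rtrancl_trans)
  qed
  with assms(2,4) show ?thesis
    by blast
qed

lemma set_rank_contract:
  assumes "L \<subseteq> S" and "S \<subseteq> V"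
  shows "set_rank contracted_edges (cls ` S) = set_rank E S - int (card F)"
proof -
  let ?H = "induced_edges E S" and ?H' = "induced_edges contracted_edges (cls ` S)"
  have reach_H: "reach S ?H = (adj ?H)\<^sup>* \<inter> S \<times> S"
    by (rule reach_eq_rtrancl_adj) (auto simp: induced_edges_def)
  have reach_H': "reach (cls ` S) ?H' = (adj ?H')\<^sup>* \<inter> cls ` S \<times> cls ` S"
    by (rule reach_eq_rtrancl_adj) (auto simp: induced_edges_def)
  have "card (S // reach S ?H) = card (cls ` S // reach (cls ` S) ?H')"
  proof (rule card_quotient_image[OF refl equiv_reach equiv_reach])
    fix x y
    assume "x \<in> S" "y \<in> S"
    then show "(x, y) \<in> reach S ?H \<longleftrightarrow> (cls x, cls y) \<in> reach (cls ` S) ?H'"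
      unfolding reach_H reach_H'
      using rtrancl_adj_induced_imp_contracted rtrancl_adj_contracted_imp_induced[OF assms(1)]
      by blast
  qed
  then show ?thesis
    using card_image_cls[OF assms] unfolding set_rank_def graph_rank_def components_def by simp
qed

lemma independent_set_contract:
  assumes "L \<subseteq> X" and "\<And>e. e \<in> E \<Longrightarrow> e \<subseteq> X \<Longrightarrow> e \<subseteq> L"
  shows "independent_set contracted_edges (cls ` X)"
  unfolding independent_set_def
proof (intro ballI notI)
  fix e
  assume "e \<in> contracted_edges" and "e \<subseteq> cls ` X"
  then obtain a b where e: "e = {cls a, cls b}" "{a, b} \<in> E" "cls a \<noteq> cls b"
    unfolding contracted_edges_def by blast
  with \<open>e \<subseteq> cls ` X\<close> have "{a, b} \<subseteq> X"
    using cls_image_mem_iff[OF assms(1)] by simp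
  then have "a \<in> L" "b \<in> L"
    using assms(2)[OF e(2)] by blast+
  with e show False
    using cls_eq_if_edge_in_L by blast
qed

lemma annotated_solution_contract_iff:
  assumes "L \<subseteq> X" and "X \<subseteq> V" and "Xs \<subseteq> X" and "Xs \<inter> L = {}" and "Ys \<subseteq> V - X"
  shows "vertex_cover V E ((X - Xs) \<union> Ys) \<longleftrightarrow>
      vertex_cover (cls ` V) contracted_edges ((cls ` X - cls ` Xs) \<union> cls ` Ys)"
    and "set_rank E ((X - Xs) \<union> Ys) \<ge> k \<longleftrightarrow>
      set_rank contracted_edges ((cls ` X - cls ` Xs) \<union> cls ` Ys) \<ge> k - int (card F)"
    and "int (card Ys) - int (card Xs) \<le> k - d \<longleftrightarrow>
      int (card (cls ` Ys)) - int (card (cls ` Xs)) \<le> (k - int (card F)) - (d - int (card F))"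
    and "R \<subseteq> Xs \<longleftrightarrow> cls ` R \<subseteq> cls ` Xs"
proof -
  define S where "S = (X - Xs) \<union> Ys"
  have S: "L \<subseteq> S" "S \<subseteq> V"
    using assms unfolding S_def by blast+
  have image_S: "(cls ` X - cls ` Xs) \<union> cls ` Ys = cls ` S"
    unfolding S_def image_Un image_cls_Diff[OF assms(4)] ..
  show "vertex_cover V E ((X - Xs) \<union> Ys) \<longleftrightarrow>
      vertex_cover (cls ` V) contracted_edges ((cls ` X - cls ` Xs) \<union> cls ` Ys)"
    unfolding image_S S_def[symmetric] by (rule vertex_cover_contract_iff[OF S])
  show "set_rank E ((X - Xs) \<union> Ys) \<ge> k \<longleftrightarrow>
      set_rank contracted_edges ((cls ` X - cls ` Xs) \<union> cls ` Ys) \<ge> k - int (card F)"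
    unfolding image_S S_def[symmetric] set_rank_contract[OF S] by simp
  have "card (cls ` Xs) = card Xs" "card (cls ` Ys) = card Ys"
    using assms(1,4,5) by (auto intro!: card_image inj_on_subset[OF inj_on_cls])
  then show "int (card Ys) - int (card Xs) \<le> k - d \<longleftrightarrow>
      int (card (cls ` Ys)) - int (card (cls ` Xs)) \<le> (k - int (card F)) - (d - int (card F))"
    by simp
  show "R \<subseteq> Xs \<longleftrightarrow> cls ` R \<subseteq> cls ` Xs"
  proof
    assume "cls ` R \<subseteq> cls ` Xs"
    show "R \<subseteq> Xs"
    proof
      fix r
      assume "r \<in> R"
      with \<open>cls ` R \<subseteq> cls ` Xs\<close> obtain x where "x \<in> Xs" "cls r = cls x"
        by blast
      moreover from \<open>x \<in> Xs\<close> have "x \<notin> L"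
        using assms(4) by blast
      ultimately show "r \<in> Xs"
        using cls_eq_imp_in_L by blast
    qed
  qed (rule image_mono)
qed

lemma annotated_yes_contract_iff:
  assumes "L \<subseteq> X" and "X \<subseteq> V"
  shows "annotated_yes V E k d X L R \<longleftrightarrow>
    annotated_yes (cls ` V) contracted_edges (k - int (card F)) (d - int (card F))
      (cls ` X) (cls ` L) (cls ` R)"
proof
  assume "annotated_yes V E k d X L R"
  then obtain Xs Ys where Xs: "Xs \<subseteq> X" "L \<inter> Xs = {}" and Ys: "Ys \<subseteq> V - X"
    and solution: "vertex_cover V E ((X - Xs) \<union> Ys)" "set_rank E ((X - Xs) \<union> Ys) \<ge> k"
      "int (card Ys) - int (card Xs) \<le> k - d" "R \<subseteq> Xs"
    by (rule annotated_yesE)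
  have "Xs \<inter> L = {}" "X \<inter> Ys = {}" "Ys \<inter> L = {}"
    using Xs(2) Ys assms(1) by blast+
  note transfer = annotated_solution_contract_iff[OF assms Xs(1) this(1) Ys]
  show "annotated_yes (cls ` V) contracted_edges (k - int (card F)) (d - int (card F))
      (cls ` X) (cls ` L) (cls ` R)"
  proof (rule annotated_yesI)
    show "cls ` Xs \<subseteq> cls ` X"
      using Xs(1) by (rule image_mono)
    have "cls ` X \<inter> cls ` Ys = {}"
      using \<open>X \<inter> Ys = {}\<close> \<open>Ys \<inter> L = {}\<close> by (rule image_cls_disjoint)
    with Ys show "cls ` Ys \<subseteq> cls ` V - cls ` X"
      by blast
    show "cls ` L \<inter> cls ` Xs = {}"
      using Xs(2) \<open>Xs \<inter> L = {}\<close> by (rule image_cls_disjoint)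
  qed (fact transfer(1)[THEN iffD1, OF solution(1)] transfer(2)[THEN iffD1, OF solution(2)]
      transfer(3)[THEN iffD1, OF solution(3)] transfer(4)[THEN iffD1, OF solution(4)])+
next
  assume "annotated_yes (cls ` V) contracted_edges (k - int (card F)) (d - int (card F))
      (cls ` X) (cls ` L) (cls ` R)"
  then obtain Xs' Ys' where Xs': "Xs' \<subseteq> cls ` X" "cls ` L \<inter> Xs' = {}"
    and Ys': "Ys' \<subseteq> cls ` V - cls ` X"
    and solution: "vertex_cover (cls ` V) contracted_edges ((cls ` X - Xs') \<union> Ys')"
      "set_rank contracted_edges ((cls ` X - Xs') \<union> Ys') \<ge> k - int (card F)"
      "int (card Ys') - int (card Xs') \<le> (k - int (card F)) - (d - int (card F))"
      "cls ` R \<subseteq> Xs'"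
    by (rule annotated_yesE)
  define Xs where "Xs = X \<inter> cls -` Xs'"
  define Ys where "Ys = (V - X) \<inter> cls -` Ys'"
  have Xs: "Xs \<subseteq> X" "Xs \<inter> L = {}" "L \<inter> Xs = {}" and Ys: "Ys \<subseteq> V - X"
    using Xs'(2) unfolding Xs_def Ys_def by blast+
  have "Xs' = cls ` Xs"
    using Xs'(1) unfolding Xs_def by blast
  moreover have "Ys' = cls ` Ys"
    using Ys' unfolding Ys_def by blast
  ultimately have solution': "vertex_cover (cls ` V) contracted_edges ((cls ` X - cls ` Xs) \<union> cls ` Ys)"
      "set_rank contracted_edges ((cls ` X - cls ` Xs) \<union> cls ` Ys) \<ge> k - int (card F)"
      "int (card (cls ` Ys)) - int (card (cls ` Xs)) \<le> (k - int (card F)) - (d - int (card F))"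
      "cls ` R \<subseteq> cls ` Xs"
    using solution by simp_all
  note transfer = annotated_solution_contract_iff[OF assms Xs(1,2) Ys]
  show "annotated_yes V E k d X L R"
    using Xs(1) Ys transfer(1)[THEN iffD2, OF solution'(1)] transfer(2)[THEN iffD2, OF solution'(2)]
      transfer(3)[THEN iffD2, OF solution'(3)] Xs(3) transfer(4)[THEN iffD2, OF solution'(4)]
    by (rule annotated_yesI)
qed

end

theorem lemma14:
  fixes V :: "'a set" and E :: "'a set set" and k d :: int
    and X XL XR :: "'a set" and F1 F2 :: "'a set set"
  assumes "simple_graph V E"
    and "vertex_cover V E X"
    and "XL \<subseteq> X" and "XR \<subseteq> X" and "XL \<inter> XR = {}"
    and "independent_set E XR"
    and "\<forall>e\<in>induced_edges E X. e \<subseteq> XL \<union> XR"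
    and "F1 = edges_between E XL XR"
    and "spanning_forest XL (induced_edges E XL) F2"
  shows "(annotated_yes V E k d X XL XR \<longleftrightarrow>
           annotated_yes (fst (contract V (E - F1) F2)) (snd (contract V (E - F1) F2))
             (k - int (card F2)) (d - int (card F2))
             (fst (contract X (induced_edges E X) F2))
             (fst (contract XL (induced_edges E XL) F2))
             (contract_img V F2 ` XR))
         \<and> independent_set (snd (contract V (E - F1) F2)) (fst (contract X (induced_edges E X) F2))"
proof -
  have "X \<subseteq> V"
    using assms(2) by (simp add: vertex_cover_def)
  have F1_meets: "e \<inter> XL \<noteq> {} \<and> e \<inter> XR \<noteq> {}" if "e \<in> F1" for e
    using that unfolding assms(8) edges_between_def by blast
  then have "induced_edges (E - F1) XL = induced_edges E XL"
    using assms(5) unfolding induced_edges_def by blast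
  with assms \<open>X \<subseteq> V\<close> interpret forest_contraction V "E - F1" XL F2
    by unfold_locales (auto simp: simple_graph_def)
  have "e \<subseteq> XL" if "e \<in> E - F1" "e \<subseteq> X" for e
    using assms(1,6,7) that unfolding assms(8) simple_graph_def
    by (intro edge_subset_if_notin_edges_between[of E XR X XL]) auto
  then have "independent_set contracted_edges (cls ` X)"
    using assms(3) by (rule independent_set_contract[rotated])
  moreover have "contract_img V F2 ` XR = cls ` XR"
    using assms(4) \<open>X \<subseteq> V\<close> by (intro image_cong) (auto simp: contract_img_eq)
  moreover have "annotated_yes V E k d X XL XR \<longleftrightarrow> annotated_yes V (E - F1) k d X XL XR"
    using assms(3) F1_meets by (rule annotated_yes_Diff_edges)
  moreover have "annotated_yes V (E - F1) k d X XL XR \<longleftrightarrow>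
      annotated_yes (cls ` V) contracted_edges (k - int (card F2)) (d - int (card F2))
        (cls ` X) (cls ` XL) (cls ` XR)"
    using assms(3) \<open>X \<subseteq> V\<close> by (rule annotated_yes_contract_iff)
  ultimately show ?thesis
    by (simp add: fst_contract_eq[OF L_subset] fst_contract_eq[OF assms(3)] fst_contract_eq[OF order_refl]
        snd_contract_eq)
qed

end
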